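(* Let $1\le p\le q\le\infty$ and let $E$ be a locally convex space in which every bounded sequence has a weakly Cauchy subsequence. Then $E$ has the $spGP_{(p,q)}$ property if and only if every weakly null sequence $(x_n)$ in $E$ whose range $\{x_n:n\in\omega\}$ is a $(p,q)$-limited set converges to $0$ in $E$ (i.e., the identity map of $E$ is $(p,q)$-limited $\infty$-convergent).
   Context: For $A\subseteq E$ and $\chi\in E'$, $\|\chi\|_A:=\sup\{|\chi(x)|:x\in A\cup\{0\}\}$. A sequence $(\chi_n)$ in $E'$ is weak$^*$ $p$-summable if $(\chi_n(x))_n\in\ell_p$ for every $x\in E$ (in $c_0$ if $p=\infty$). A nonempty $A\subseteq E$ is $(p,q)$-limited if for every weak$^*$ $p$-summable $(\chi_n)$ in $E'$, $(\|\chi_n\|_A)_n\in\ell_q$ if $q<\infty$ and $\|\chi_n\|_A\to0$ if $q=\infty$. $E$ has the $spGP_{(p,q)}$ property if every $(p,q)$-limited subset of $E$ is sequentially precompact (every sequence in it has a subsequence that is Cauchy in $E$). *)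

theory Defs
  imports "HOL-Analysis.Analysis"
begin

text \<open>A (Hausdorff, real) locally convex space is represented by a real vector space
  together with a separating family of seminorms P :: 'i => 'a => real generating its topology.\<close>

definition seminorm :: "('a::real_vector \<Rightarrow> real) \<Rightarrow> bool" where
  "seminorm q \<longleftrightarrow> (\<forall>x y. q (x + y) \<le> q x + q y) \<and> (\<forall>c x. q (c *\<^sub>R x) = \<bar>c\<bar> * q x)"

definition lcs :: "('i \<Rightarrow> 'a::real_vector \<Rightarrow> real) \<Rightarrow> bool" where
  "lcs P \<longleftrightarrow> (\<forall>i. seminorm (P i)) \<and> (\<forall>x. x \<noteq> 0 \<longrightarrow> (\<exists>i. P i x \<noteq> 0))"

text \<open>Topological dual E': linear functionals continuous for the seminorm topology.\<close>
definition dual :: "('i \<Rightarrow> 'a::real_vector \<Rightarrow> real) \<Rightarrow> ('a \<Rightarrow> real) set" where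
  "dual P = {f. linear f \<and> (\<exists>F C. finite F \<and> (\<forall>x. \<bar>f x\<bar> \<le> C * (\<Sum>i\<in>F. P i x)))}"

definition lcs_cauchy :: "('i \<Rightarrow> 'a::real_vector \<Rightarrow> real) \<Rightarrow> (nat \<Rightarrow> 'a) \<Rightarrow> bool" where
  "lcs_cauchy P x \<longleftrightarrow> (\<forall>i. \<forall>e>0. \<exists>N. \<forall>m\<ge>N. \<forall>n\<ge>N. P i (x m - x n) < e)"

definition lcs_null :: "('i \<Rightarrow> 'a::real_vector \<Rightarrow> real) \<Rightarrow> (nat \<Rightarrow> 'a) \<Rightarrow> bool" where
  "lcs_null P x \<longleftrightarrow> (\<forall>i. (\<lambda>n. P i (x n)) \<longlonglongrightarrow> 0)"

definition lcs_bounded_seq :: "('i \<Rightarrow> 'a::real_vector \<Rightarrow> real) \<Rightarrow> (nat \<Rightarrow> 'a) \<Rightarrow> bool" where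
  "lcs_bounded_seq P x \<longleftrightarrow> (\<forall>i. \<exists>C. \<forall>n. P i (x n) \<le> C)"

definition weakly_cauchy :: "('i \<Rightarrow> 'a::real_vector \<Rightarrow> real) \<Rightarrow> (nat \<Rightarrow> 'a) \<Rightarrow> bool" where
  "weakly_cauchy P x \<longleftrightarrow> (\<forall>f\<in>dual P. Cauchy (\<lambda>n. f (x n)))"

definition weakly_null :: "('i \<Rightarrow> 'a::real_vector \<Rightarrow> real) \<Rightarrow> (nat \<Rightarrow> 'a) \<Rightarrow> bool" where
  "weakly_null P x \<longleftrightarrow> (\<forall>f\<in>dual P. (\<lambda>n. f (x n)) \<longlonglongrightarrow> 0)"

text \<open>Membership in l_p for p < infinity, in c_0 for p = infinity.\<close>
definition in_lp :: "ereal \<Rightarrow> (nat \<Rightarrow> real) \<Rightarrow> bool" where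
  "in_lp p a \<longleftrightarrow> (if p = \<infinity> then a \<longlonglongrightarrow> 0 else summable (\<lambda>n. \<bar>a n\<bar> powr real_of_ereal p))"

definition weak_star_summable :: "('i \<Rightarrow> 'a::real_vector \<Rightarrow> real) \<Rightarrow> ereal \<Rightarrow> (nat \<Rightarrow> 'a \<Rightarrow> real) \<Rightarrow> bool" where
  "weak_star_summable P p chi \<longleftrightarrow> (\<forall>n. chi n \<in> dual P) \<and> (\<forall>x. in_lp p (\<lambda>n. chi n x))"

definition sup_on :: "'a set \<Rightarrow> ('a::real_vector \<Rightarrow> real) \<Rightarrow> ereal" where
  "sup_on A chi = (SUP x\<in>A \<union> {0}. ereal \<bar>chi x\<bar>)"

definition pq_limited :: "('i \<Rightarrow> 'a::real_vector \<Rightarrow> real) \<Rightarrow> ereal \<Rightarrow> ereal \<Rightarrow> 'a set \<Rightarrow> bool" where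
  "pq_limited P p q A \<longleftrightarrow> A \<noteq> {} \<and>
     (\<forall>chi. weak_star_summable P p chi \<longrightarrow>
        (\<forall>n. sup_on A (chi n) \<noteq> \<infinity>) \<and> in_lp q (\<lambda>n. real_of_ereal (sup_on A (chi n))))"

definition seq_precompact :: "('i \<Rightarrow> 'a::real_vector \<Rightarrow> real) \<Rightarrow> 'a set \<Rightarrow> bool" where
  "seq_precompact P A \<longleftrightarrow> (\<forall>x::nat \<Rightarrow> 'a. (\<forall>n. x n \<in> A) \<longrightarrow> (\<exists>r::nat \<Rightarrow> nat. strict_mono r \<and> lcs_cauchy P (x \<circ> r)))"

definition spGP :: "('i \<Rightarrow> 'a::real_vector \<Rightarrow> real) \<Rightarrow> ereal \<Rightarrow> ereal \<Rightarrow> bool" where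
  "spGP P p q \<longleftrightarrow> (\<forall>A. pq_limited P p q A \<longrightarrow> seq_precompact P A)"

end

theory Submission
  imports Defs
begin

text \<open>A weakly null Cauchy sequence is null: a Hahn--Banach functional f norming \<open>x\<^sub>m\<close> for a
  seminorm \<open>p\<^sub>i\<close> gives \<open>p\<^sub>i(x\<^sub>m) \<le> p\<^sub>i(x\<^sub>m - x\<^sub>n) + f(x\<^sub>n)\<close>, and \<open>f(x\<^sub>n) \<rightarrow> 0\<close>. So if
  (p,q)-limited sets are sequentially precompact, every subsequence of a weakly null sequence with
  (p,q)-limited range has a null subsequence, and the sequence is null.

  Conversely, (p,q)-limitedness passes to sets of combinations \<open>s u + t v\<close> with u, v in the set
  and \<open>\<bar>s\<bar> + \<bar>t\<bar> \<le> 1\<close>. A (p,q)-limited set is weakly bounded, so scaling an unbounded sequence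
  in it by \<open>1/(k+1)\<close> along a subsequence would produce a weakly null sequence with (p,q)-limited
  range that is not null. Hence the set is bounded, each sequence in it has a weakly Cauchy
  subsequence, and the half-differences of that subsequence are weakly null with (p,q)-limited
  range, hence null, which is the Cauchy property.\<close>

lemma seminorm_zero: "seminorm q \<Longrightarrow> q 0 = 0"
  unfolding seminorm_def by (metis abs_zero mult_zero_left scaleR_zero_left)

lemma seminorm_minus: "seminorm q \<Longrightarrow> q (- x) = q x"
  unfolding seminorm_def by (metis abs_minus_cancel abs_one mult_1 scaleR_minus1_left)

lemma seminorm_triangle: "seminorm q \<Longrightarrow> q (x + y) \<le> q x + q y"
  unfolding seminorm_def by blast

lemma seminorm_scaleR: "seminorm q \<Longrightarrow> q (c *\<^sub>R x) = \<bar>c\<bar> * q x"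
  unfolding seminorm_def by blast

lemma seminorm_nonneg: "seminorm q \<Longrightarrow> 0 \<le> q x"
  using seminorm_triangle[of q x "- x"] seminorm_zero[of q] seminorm_minus[of q x] by simp

text \<open>Partial linear functionals are encoded by their graphs, so that Zorn's lemma can be
  applied to the inclusion order.\<close>

definition dominated_linear_graph :: "('a::real_vector \<Rightarrow> real) \<Rightarrow> ('a \<times> real) set \<Rightarrow> bool" where
  "dominated_linear_graph q H \<longleftrightarrow>
     (\<forall>x a b. (x, a) \<in> H \<longrightarrow> (x, b) \<in> H \<longrightarrow> a = b) \<and>
     (\<forall>x a y b. (x, a) \<in> H \<longrightarrow> (y, b) \<in> H \<longrightarrow> (x + y, a + b) \<in> H) \<and>
     (\<forall>x a c. (x, a) \<in> H \<longrightarrow> (c *\<^sub>R x, c * a) \<in> H) \<and>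
     (\<forall>x a. (x, a) \<in> H \<longrightarrow> a \<le> q x)"

lemma dominated_linear_graph_Union_chain:
  assumes "\<And>H. H \<in> C \<Longrightarrow> dominated_linear_graph q H"
    and "\<And>H H'. H \<in> C \<Longrightarrow> H' \<in> C \<Longrightarrow> H \<subseteq> H' \<or> H' \<subseteq> H"
  shows "dominated_linear_graph q (\<Union>C)"
proof -
  have common: "\<exists>H\<in>C. u \<in> H \<and> v \<in> H" if "u \<in> \<Union>C" "v \<in> \<Union>C" for u v
    using that assms(2) by blast
  show ?thesis
    unfolding dominated_linear_graph_def
  proof (intro conjI allI impI)
    fix x a b assume "(x, a) \<in> \<Union>C" "(x, b) \<in> \<Union>C"
    then show "a = b"
      using common assms(1) unfolding dominated_linear_graph_def by metis
  next
    fix x a y b assume "(x, a) \<in> \<Union>C" "(y, b) \<in> \<Union>C"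
    then show "(x + y, a + b) \<in> \<Union>C"
      using common assms(1) unfolding dominated_linear_graph_def by (metis UnionI)
  next
    fix x a c assume "(x, a) \<in> \<Union>C"
    then show "(c *\<^sub>R x, c * a) \<in> \<Union>C"
      using assms(1) unfolding dominated_linear_graph_def by blast
  next
    fix x a assume "(x, a) \<in> \<Union>C"
    then show "a \<le> q x"
      using assms(1) unfolding dominated_linear_graph_def by blast
  qed
qed

lemma dominated_linear_graph_extension_value:
  assumes q: "seminorm q" and H: "dominated_linear_graph q H" and "H \<noteq> {}"
  shows "\<exists>c. (\<forall>(s, g)\<in>H. g - q (s - w) \<le> c) \<and> (\<forall>(s, g)\<in>H. c \<le> q (s + w) - g)"
proof -
  define S where "S = {g - q (s - w) | s g. (s, g) \<in> H}"
  have "S \<noteq> {}" using \<open>H \<noteq> {}\<close> S_def by auto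
  have below: "v \<le> q (s + w) - g" if "v \<in> S" "(s, g) \<in> H" for v s g
  proof -
    obtain s' g' where v: "v = g' - q (s' - w)" "(s', g') \<in> H" using \<open>v \<in> S\<close> S_def by auto
    have "g + g' \<le> q (s + s')"
      using H that(2) v(2) unfolding dominated_linear_graph_def by blast
    also have "\<dots> \<le> q (s + w) + q (s' - w)"
      using seminorm_triangle[OF q, of "s + w" "s' - w"] by (simp add: algebra_simps)
    finally show ?thesis using v(1) by simp
  qed
  obtain s g where "(s, g) \<in> H" using \<open>H \<noteq> {}\<close> by auto
  then have "bdd_above S" using below by (intro bdd_aboveI[of _ "q (s + w) - g"])
  then have "g - q (s - w) \<le> Sup S" if "(s, g) \<in> H" for s g
    using that S_def by (auto intro!: cSup_upper)
  moreover have "Sup S \<le> q (s + w) - g" if "(s, g) \<in> H" for s g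
    using below that \<open>S \<noteq> {}\<close> by (intro cSup_least) auto
  ultimately show ?thesis by blast
qed

lemma dominated_linear_graph_extension_le:
  assumes q: "seminorm q" and H: "dominated_linear_graph q H" and sg: "(s, g) \<in> H"
    and lower: "\<forall>(s, g)\<in>H. g - q (s - w) \<le> c"
    and upper: "\<forall>(s, g)\<in>H. c \<le> q (s + w) - g"
  shows "g + t * c \<le> q (s + t *\<^sub>R w)"
proof -
  have scaled: "((1 / u) *\<^sub>R s, (1 / u) * g) \<in> H" for u
    using H sg unfolding dominated_linear_graph_def by blast
  consider "t > 0" | "t = 0" | "t < 0" by linarith
  then show ?thesis
  proof cases
    case 1
    have "t * c \<le> t * (q ((1 / t) *\<^sub>R s + w) - (1 / t) * g)"
      using upper scaled[of t] 1 by (intro mult_left_mono) auto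
    moreover have "s + t *\<^sub>R w = t *\<^sub>R ((1 / t) *\<^sub>R s + w)" using 1 by (simp add: algebra_simps)
    ultimately show ?thesis using 1 seminorm_scaleR[OF q, of t] by (simp add: right_diff_distrib)
  next
    case 2
    then show ?thesis using H sg unfolding dominated_linear_graph_def by simp
  next
    case 3
    have "- t * ((1 / - t) * g - q ((1 / - t) *\<^sub>R s - w)) \<le> - t * c"
      using lower scaled[of "- t"] 3 by (intro mult_left_mono) auto
    moreover have "s + t *\<^sub>R w = (- t) *\<^sub>R ((1 / - t) *\<^sub>R s - w)" using 3 by (simp add: algebra_simps)
    ultimately show ?thesis using 3 seminorm_scaleR[OF q, of "- t"] by (simp add: right_diff_distrib)
  qed
qed

lemma dominated_linear_graph_extend:
  assumes q: "seminorm q" and H: "dominated_linear_graph q H" and w: "\<forall>a. (w, a) \<notin> H"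
    and lower: "\<forall>(s, g)\<in>H. g - q (s - w) \<le> c"
    and upper: "\<forall>(s, g)\<in>H. c \<le> q (s + w) - g"
  shows "dominated_linear_graph q {(s + t *\<^sub>R w, g + t * c) | s g t. (s, g) \<in> H}"
    (is "dominated_linear_graph q ?H'")
proof -
  have add: "(x + y, a + b) \<in> H" if "(x, a) \<in> H" "(y, b) \<in> H" for x y a b
    using H that unfolding dominated_linear_graph_def by blast
  have scale: "(r *\<^sub>R x, r * a) \<in> H" if "(x, a) \<in> H" for r x a
    using H that unfolding dominated_linear_graph_def by blast
  have fu: "a = b" if "(x, a) \<in> H" "(x, b) \<in> H" for x a b
    using H that unfolding dominated_linear_graph_def by blast
  have in_H': "(s + t *\<^sub>R w, g + t * c) \<in> ?H'" if "(s, g) \<in> H" for s g t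
    using that by blast
  show ?thesis
    unfolding dominated_linear_graph_def
  proof (intro conjI allI impI)
    fix x a b assume xa: "(x, a) \<in> ?H'" and xb: "(x, b) \<in> ?H'"
    obtain s1 g1 t1 where e1: "x = s1 + t1 *\<^sub>R w" "a = g1 + t1 * c" "(s1, g1) \<in> H"
      using xa by blast
    obtain s2 g2 t2 where e2: "x = s2 + t2 *\<^sub>R w" "b = g2 + t2 * c" "(s2, g2) \<in> H"
      using xb by blast
    note e = e1 e2
    have d: "(s2 - s1, g2 - g1) \<in> H" using add[OF e(6) scale[OF e(3), of "-1"]] by simp
    have "t1 = t2"
    proof (rule ccontr)
      assume "t1 \<noteq> t2"
      then have "w = (1 / (t1 - t2)) *\<^sub>R ((t1 - t2) *\<^sub>R w)" by simp
      also have "(t1 - t2) *\<^sub>R w = s2 - s1"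
        using e(1,4) by (simp add: algebra_simps)
      finally have "w = (1 / (t1 - t2)) *\<^sub>R (s2 - s1)" .
      then have "(w, (1 / (t1 - t2)) * (g2 - g1)) \<in> H"
        using scale[OF d, of "1 / (t1 - t2)"] by (simp only:)
      then show False using w by blast
    qed
    moreover from this have "s1 = s2" using e(1,4) by simp
    ultimately show "a = b" using e fu[OF e(3)] by simp
  next
    fix x a y b assume "(x, a) \<in> ?H'" "(y, b) \<in> ?H'"
    then obtain s1 g1 t1 s2 g2 t2 where e: "x = s1 + t1 *\<^sub>R w" "a = g1 + t1 * c" "(s1, g1) \<in> H"
      "y = s2 + t2 *\<^sub>R w" "b = g2 + t2 * c" "(s2, g2) \<in> H" by blast
    have "(x + y, a + b) = ((s1 + s2) + (t1 + t2) *\<^sub>R w, (g1 + g2) + (t1 + t2) * c)"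
      using e by (simp add: algebra_simps)
    then show "(x + y, a + b) \<in> ?H'" using in_H'[OF add[OF e(3) e(6)]] by simp
  next
    fix x a r assume "(x, a) \<in> ?H'"
    then obtain s g t where e: "x = s + t *\<^sub>R w" "a = g + t * c" "(s, g) \<in> H" by blast
    have "(r *\<^sub>R x, r * a) = (r *\<^sub>R s + (r * t) *\<^sub>R w, r * g + (r * t) * c)"
      using e by (simp add: algebra_simps)
    then show "(r *\<^sub>R x, r * a) \<in> ?H'" using in_H'[OF scale[OF e(3)]] by simp
  next
    fix x a assume "(x, a) \<in> ?H'"
    then obtain s g t where e: "x = s + t *\<^sub>R w" "a = g + t * c" "(s, g) \<in> H" by blast
    then show "a \<le> q x" using dominated_linear_graph_extension_le[OF q H e(3) lower upper] by simp
  qed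
qed

lemma maximal_dominated_linear_graph_total:
  assumes q: "seminorm q" and M: "dominated_linear_graph q M" "M \<noteq> {}"
    and maximal: "\<And>H. dominated_linear_graph q H \<Longrightarrow> M \<subseteq> H \<Longrightarrow> H = M"
  shows "\<exists>a. (w, a) \<in> M"
proof (rule ccontr)
  assume w: "\<nexists>a. (w, a) \<in> M"
  obtain c where c: "\<forall>(s, g)\<in>M. g - q (s - w) \<le> c" "\<forall>(s, g)\<in>M. c \<le> q (s + w) - g"
    using dominated_linear_graph_extension_value[OF q M] by blast
  define M' where "M' = {(s + t *\<^sub>R w, g + t * c) | s g t. (s, g) \<in> M}"
  have "dominated_linear_graph q M'"
    unfolding M'_def using dominated_linear_graph_extend[OF q M(1) _ c] w by blast
  moreover have "M \<subseteq> M'"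
  proof (rule subrelI)
    fix s g assume "(s, g) \<in> M"
    then show "(s, g) \<in> M'"
      unfolding M'_def by (intro CollectI exI[of _ s] exI[of _ g] exI[of _ 0]) simp
  qed
  ultimately have "M' = M" by (rule maximal)
  obtain s g where "(s, g) \<in> M" using M(2) by auto
  then have "(0, 0) \<in> M"
    using M(1) unfolding dominated_linear_graph_def by (metis mult_zero_left scaleR_zero_left)
  then have "(w, c) \<in> M'"
    unfolding M'_def by (intro CollectI exI[of _ 0] exI[of _ 0] exI[of _ 1]) simp
  then show False using w \<open>M' = M\<close> by blast
qed

lemma total_dominated_linear_graph_functional:
  assumes q: "seminorm q" and M: "dominated_linear_graph q M" and total: "\<And>x. \<exists>a. (x, a) \<in> M"
  shows "\<exists>f. linear f \<and> (\<forall>x. \<bar>f x\<bar> \<le> q x) \<and> (\<forall>x a. (x, a) \<in> M \<longrightarrow> f x = a)"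
proof -
  have fu: "\<And>x a b. (x, a) \<in> M \<Longrightarrow> (x, b) \<in> M \<Longrightarrow> a = b"
    and add: "\<And>x a y b. (x, a) \<in> M \<Longrightarrow> (y, b) \<in> M \<Longrightarrow> (x + y, a + b) \<in> M"
    and scale: "\<And>x a r. (x, a) \<in> M \<Longrightarrow> (r *\<^sub>R x, r * a) \<in> M"
    and below: "\<And>x a. (x, a) \<in> M \<Longrightarrow> a \<le> q x"
    using M unfolding dominated_linear_graph_def by blast+
  define f where "f x = (THE a. (x, a) \<in> M)" for x
  have fI: "f x = a" if "(x, a) \<in> M" for x a
    unfolding f_def using that fu by (intro the_equality)
  have fM: "(x, f x) \<in> M" for x
    using total[of x] fI by blast
  have "linear f"
    unfolding linear_iff using fI[OF add[OF fM fM]] fI[OF scale[OF fM]] by simp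
  moreover have "\<bar>f x\<bar> \<le> q x" for x
  proof -
    have "- f x \<le> q x"
      using below[OF scale[OF fM[of x], of "-1"]] seminorm_minus[OF q, of x] by simp
    then show ?thesis using below[OF fM[of x]] by (simp add: abs_le_iff)
  qed
  ultimately show ?thesis using fI by blast
qed

lemma exists_dominated_linear_graph_attaining:
  assumes q: "seminorm q"
  shows "\<exists>H. dominated_linear_graph q H \<and> (z, q z) \<in> H"
proof -
  have zero_graph: "dominated_linear_graph q {(0, 0)}"
    using seminorm_zero[OF q] unfolding dominated_linear_graph_def by simp
  show ?thesis
  proof (cases "z = 0")
    case True
    then show ?thesis using zero_graph seminorm_zero[OF q] by blast
  next
    case False
    have "dominated_linear_graph q {(s + t *\<^sub>R z, g + t * q z) | s g t. (s, g) \<in> {(0, 0)}}"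
      using False seminorm_nonneg[OF q, of z] seminorm_minus[OF q, of z]
      by (intro dominated_linear_graph_extend[OF q zero_graph]) auto
    moreover have "(z, q z) \<in> {(s + t *\<^sub>R z, g + t * q z) | s g t. (s, g) \<in> {(0, 0)}}"
      by (auto intro!: exI[of _ 1])
    ultimately show ?thesis by blast
  qed
qed

theorem seminorm_Hahn_Banach:
  fixes q :: "'a::real_vector \<Rightarrow> real"
  assumes q: "seminorm q"
  shows "\<exists>f. linear f \<and> (\<forall>x. \<bar>f x\<bar> \<le> q x) \<and> f z = q z"
proof -
  define \<A> where "\<A> = {H. dominated_linear_graph q H \<and> (z, q z) \<in> H}"
  have "\<A> \<noteq> {}" using exists_dominated_linear_graph_attaining[OF q] \<A>_def by blast
  moreover have "\<Union>C \<in> \<A>" if "C \<noteq> {}" "subset.chain \<A> C" for C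
    using that dominated_linear_graph_Union_chain[of C q]
    unfolding \<A>_def subset.chain_def by blast
  ultimately obtain M where M: "M \<in> \<A>" and maximal: "\<And>H. H \<in> \<A> \<Longrightarrow> M \<subseteq> H \<Longrightarrow> H = M"
    using subset_Zorn_nonempty[of \<A>] by blast
  then have MH: "dominated_linear_graph q M" and zM: "(z, q z) \<in> M" using \<A>_def by auto
  have "\<exists>a. (w, a) \<in> M" for w
    using maximal_dominated_linear_graph_total[OF q MH] zM maximal
    unfolding \<A>_def by blast
  then show ?thesis
    using total_dominated_linear_graph_functional[OF q MH] zM by blast
qed

lemma lcs_seminorm: "lcs P \<Longrightarrow> seminorm (P i)"
  unfolding lcs_def by blast

lemma dual_linear: "f \<in> dual P \<Longrightarrow> linear f"
  unfolding dual_def by blast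

lemma zero_in_dual: "(\<lambda>_. 0) \<in> dual P"
  unfolding dual_def by (auto intro!: exI[of _ "{}"] exI[of _ 0] linear_zero)

lemma dual_norming_functional:
  assumes "lcs P"
  shows "\<exists>f\<in>dual P. (\<forall>x. \<bar>f x\<bar> \<le> P i x) \<and> f z = P i z"
proof -
  obtain f where f: "linear f" "\<forall>x. \<bar>f x\<bar> \<le> P i x" "f z = P i z"
    using seminorm_Hahn_Banach[OF lcs_seminorm[OF assms]] by blast
  then have "f \<in> dual P"
    unfolding dual_def by (auto intro!: exI[of _ "{i}"] exI[of _ 1])
  then show ?thesis using f by blast
qed

lemma weakly_null_subseq:
  "weakly_null P x \<Longrightarrow> strict_mono r \<Longrightarrow> weakly_null P (x \<circ> r)"
  unfolding weakly_null_def using LIMSEQ_subseq_LIMSEQ by (fastforce simp: comp_def)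

lemma lcs_null_if_cauchy_weakly_null:
  assumes lcs: "lcs P" and cauchy: "lcs_cauchy P y" and null: "weakly_null P y"
  shows "lcs_null P y"
  unfolding lcs_null_def
proof (intro allI LIMSEQ_I)
  fix i and r :: real assume "0 < r"
  then obtain N where N: "\<And>m n. m \<ge> N \<Longrightarrow> n \<ge> N \<Longrightarrow> P i (y m - y n) < r / 2"
    using cauchy unfolding lcs_cauchy_def by (meson half_gt_zero)
  have "norm (P i (y m) - 0) < r" if "m \<ge> N" for m
  proof -
    obtain f where f: "f \<in> dual P" "\<forall>x. \<bar>f x\<bar> \<le> P i x" "f (y m) = P i (y m)"
      using dual_norming_functional[OF lcs] by blast
    have "(\<lambda>n. r / 2 + f (y n)) \<longlonglongrightarrow> r / 2 + 0"
      using null f(1) unfolding weakly_null_def by (intro tendsto_intros) blast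
    moreover have "f (y m) \<le> r / 2 + f (y n)" if "n \<ge> N" for n
      using f(2)[rule_format, of "y m - y n"] N[OF \<open>m \<ge> N\<close> that]
        linear_diff[OF dual_linear[OF f(1)]] by simp
    ultimately have "f (y m) \<le> r / 2 + 0"
      by (intro LIMSEQ_le_const) auto
    then show ?thesis
      using f(3) seminorm_nonneg[OF lcs_seminorm[OF lcs]] \<open>0 < r\<close> by simp
  qed
  then show "\<exists>N. \<forall>m\<ge>N. norm (P i (y m) - 0) < r" by blast
qed

lemma in_lp_mono:
  assumes "0 \<le> q" and ab: "\<And>n. 0 \<le> a n \<and> a n \<le> b n" and b: "in_lp q b"
  shows "in_lp q a"
proof (cases "q = \<infinity>")
  case True
  then have "b \<longlonglongrightarrow> 0" using b unfolding in_lp_def by simp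
  then have "a \<longlonglongrightarrow> 0"
    using ab by (intro tendsto_sandwich[of "\<lambda>_. 0" a sequentially b 0]) auto
  then show ?thesis using True unfolding in_lp_def by simp
next
  case False
  with \<open>0 \<le> q\<close> obtain r where r: "q = ereal r" "0 \<le> r" by (cases q) auto
  have "summable (\<lambda>n. \<bar>b n\<bar> powr r)" using b False r unfolding in_lp_def by simp
  moreover have "norm (\<bar>a n\<bar> powr r) \<le> \<bar>b n\<bar> powr r" for n
    using ab[of n] r(2) by (simp add: powr_mono2)
  ultimately have "summable (\<lambda>n. \<bar>a n\<bar> powr r)"
    by (rule summable_comparison_test')
  then show ?thesis using False r unfolding in_lp_def by simp
qed

lemma sup_on_ge: "x \<in> A \<union> {0} \<Longrightarrow> ereal \<bar>f x\<bar> \<le> sup_on A f"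
  unfolding sup_on_def by (rule SUP_upper)

lemma sup_on_nonneg: "0 \<le> sup_on A f"
  by (rule order_trans[OF _ sup_on_ge[of 0]]) auto

lemma pq_limited_dominated:
  assumes A: "pq_limited P p q A" and "0 \<le> q" and "B \<noteq> {}"
    and dom: "\<And>f b. f \<in> dual P \<Longrightarrow> b \<in> B \<Longrightarrow> ereal \<bar>f b\<bar> \<le> sup_on A f"
  shows "pq_limited P p q B"
  unfolding pq_limited_def
proof (intro conjI[OF \<open>B \<noteq> {}\<close>] allI impI conjI)
  fix chi assume chi: "weak_star_summable P p chi"
  then have finite: "sup_on A (chi n) \<noteq> \<infinity>" for n
    using A unfolding pq_limited_def by blast
  have lp: "in_lp q (\<lambda>n. real_of_ereal (sup_on A (chi n)))"
    using A chi unfolding pq_limited_def by blast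
  have le: "sup_on B (chi n) \<le> sup_on A (chi n)" for n
    unfolding sup_on_def[of B]
  proof (rule SUP_least)
    fix x assume "x \<in> B \<union> {0}"
    then show "ereal \<bar>chi n x\<bar> \<le> sup_on A (chi n)"
      using dom chi sup_on_ge[of 0 A "chi n"] unfolding weak_star_summable_def by auto
  qed
  show "sup_on B (chi n) \<noteq> \<infinity>" for n
    using le finite by (metis ereal_infty_less_eq(1))
  show "in_lp q (\<lambda>n. real_of_ereal (sup_on B (chi n)))"
    by (rule in_lp_mono[OF \<open>0 \<le> q\<close> _ lp])
      (simp add: real_of_ereal_pos sup_on_nonneg real_of_ereal_positive_mono le finite)
qed

lemma pq_limited_combinations:
  assumes A: "pq_limited P p q A" and "0 \<le> q" and "B \<noteq> {}"
    and comb: "\<And>b. b \<in> B \<Longrightarrow> \<exists>u\<in>A. \<exists>v\<in>A. \<exists>s t. \<bar>s\<bar> + \<bar>t\<bar> \<le> 1 \<and> b = s *\<^sub>R u + t *\<^sub>R v"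
  shows "pq_limited P p q B"
proof (rule pq_limited_dominated[OF A \<open>0 \<le> q\<close> \<open>B \<noteq> {}\<close>])
  fix f b assume f: "f \<in> dual P" and "b \<in> B"
  then obtain u v s t where uv: "u \<in> A" "v \<in> A" "\<bar>s\<bar> + \<bar>t\<bar> \<le> 1" "b = s *\<^sub>R u + t *\<^sub>R v"
    using comb by blast
  show "ereal \<bar>f b\<bar> \<le> sup_on A f"
  proof (cases "sup_on A f")
    case (real S)
    have "\<bar>f u\<bar> \<le> S" "\<bar>f v\<bar> \<le> S"
      using sup_on_ge[of u A f] sup_on_ge[of v A f] uv real by auto
    moreover have "\<bar>f b\<bar> \<le> \<bar>s\<bar> * \<bar>f u\<bar> + \<bar>t\<bar> * \<bar>f v\<bar>"
      using uv(4) linear_add[OF dual_linear[OF f]] linear_scale[OF dual_linear[OF f]]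
        abs_triangle_ineq[of "s * f u" "t * f v"]
      by (simp add: abs_mult)
    ultimately have "\<bar>f b\<bar> \<le> (\<bar>s\<bar> + \<bar>t\<bar>) * S"
      by (smt (verit) distrib_right mult_left_mono abs_ge_zero)
    also have "\<dots> \<le> S"
      using uv(3) real sup_on_nonneg[of A f] by (simp add: mult_left_le_one_le)
    finally show ?thesis using real by simp
  qed (use sup_on_nonneg[of A f] in auto)
qed

text \<open>A single functional followed by zeros is weak* p-summable for every p.\<close>

lemma pq_limited_sup_on_finite:
  assumes A: "pq_limited P p q A" and f: "f \<in> dual P"
  shows "sup_on A f \<noteq> \<infinity>"
proof -
  define chi where "chi n = (if n = 0 then f else (\<lambda>_. 0))" for n :: nat
  have "in_lp p (\<lambda>n. chi n x)" for x
  proof (cases "p = \<infinity>")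
    case True
    have "(\<lambda>n. chi (Suc n) x) \<longlonglongrightarrow> 0" by (simp add: chi_def)
    then have "(\<lambda>n. chi n x) \<longlonglongrightarrow> 0" by (rule LIMSEQ_imp_Suc)
    then show ?thesis using True unfolding in_lp_def by simp
  next
    case False
    have "summable (\<lambda>n. \<bar>chi n x\<bar> powr real_of_ereal p)"
      by (rule summable_finite[of "{0}"]) (auto simp: chi_def)
    then show ?thesis using False unfolding in_lp_def by simp
  qed
  moreover have "chi n \<in> dual P" for n
    using f by (auto simp: chi_def intro: zero_in_dual)
  ultimately have "weak_star_summable P p chi"
    unfolding weak_star_summable_def by blast
  then have "sup_on A (chi 0) \<noteq> \<infinity>" using A unfolding pq_limited_def by blast
  then show ?thesis by (simp add: chi_def)
qed

lemma pq_limited_weakly_bounded: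
  assumes "pq_limited P p q A" and "f \<in> dual P" and "x \<in> A"
  shows "\<bar>f x\<bar> \<le> real_of_ereal (sup_on A f)"
  using pq_limited_sup_on_finite[OF assms(1,2)] sup_on_ge[of x A f] \<open>x \<in> A\<close>
  by (cases "sup_on A f") auto

definition pq_limited_weakly_null_convergent ::
    "('i \<Rightarrow> 'a::real_vector \<Rightarrow> real) \<Rightarrow> ereal \<Rightarrow> ereal \<Rightarrow> bool" where
  "pq_limited_weakly_null_convergent P p q \<longleftrightarrow>
     (\<forall>x. weakly_null P x \<and> pq_limited P p q (range x) \<longrightarrow> lcs_null P x)"

lemma not_tendsto_zero_subseq:
  fixes g :: "nat \<Rightarrow> real"
  assumes "\<not> g \<longlonglongrightarrow> 0"
  obtains e and r :: "nat \<Rightarrow> nat" where "e > 0" "strict_mono r" "\<And>k. e \<le> \<bar>g (r k)\<bar>"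
proof -
  obtain e where "e > 0" and frequently: "\<forall>N. \<exists>n\<ge>N. \<not> \<bar>g n\<bar> < e"
    using assms unfolding LIMSEQ_iff by auto
  have "infinite {n. e \<le> \<bar>g n\<bar>}"
    unfolding infinite_nat_iff_unbounded_le using frequently by (auto simp: not_less)
  then obtain r :: "nat \<Rightarrow> nat" where r: "strict_mono r" "\<forall>k. r k \<in> {n. e \<le> \<bar>g n\<bar>}"
    using infinite_enumerate by blast
  show ?thesis
    by (rule that[OF \<open>e > 0\<close> r(1)]) (use r(2) in simp)
qed

lemma spGP_imp_pq_limited_weakly_null_convergent:
  assumes lcs: "lcs P" and sp: "spGP P p q"
  shows "pq_limited_weakly_null_convergent P p q"
  unfolding pq_limited_weakly_null_convergent_def lcs_null_def
proof (intro allI impI)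
  fix x i assume x: "weakly_null P x \<and> pq_limited P p q (range x)"
  show "(\<lambda>n. P i (x n)) \<longlonglongrightarrow> 0"
  proof (rule ccontr)
    assume "\<not> (\<lambda>n. P i (x n)) \<longlonglongrightarrow> 0"
    then obtain e and r :: "nat \<Rightarrow> nat" where e: "e > 0" "strict_mono r" "\<And>k. e \<le> \<bar>P i (x (r k))\<bar>"
      by (rule not_tendsto_zero_subseq) blast
    have "seq_precompact P (range x)" using sp x unfolding spGP_def by blast
    then obtain s where s: "strict_mono s" "lcs_cauchy P (x \<circ> r \<circ> s)"
      unfolding seq_precompact_def by (metis comp_apply rangeI)
    have "weakly_null P (x \<circ> r \<circ> s)"
      using x weakly_null_subseq[OF weakly_null_subseq[OF _ e(2)] s(1)] by blast
    then have "(\<lambda>n. P i (x (r (s n)))) \<longlonglongrightarrow> 0"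
      using lcs_null_if_cauchy_weakly_null[OF lcs s(2)] unfolding lcs_null_def by simp
    from LIMSEQ_D[OF this e(1)] obtain N where "\<bar>P i (x (r (s N)))\<bar> < e" by auto
    then show False using e(3)[of "s N"] by simp
  qed
qed

lemma weakly_null_scaled:
  assumes bounded: "\<And>f. f \<in> dual P \<Longrightarrow> \<exists>B. \<forall>n. \<bar>f (x n)\<bar> \<le> B" and c: "c \<longlonglongrightarrow> 0"
  shows "weakly_null P (\<lambda>n. c n *\<^sub>R x n)"
  unfolding weakly_null_def
proof
  fix f assume f: "f \<in> dual P"
  then obtain B where B: "\<And>n. \<bar>f (x n)\<bar> \<le> B" using bounded by blast
  have "norm (f (c n *\<^sub>R x n)) \<le> \<bar>c n\<bar> * B" for n
    using B[of n] linear_scale[OF dual_linear[OF f]] by (simp add: abs_mult mult_left_mono)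
  moreover have "(\<lambda>n. \<bar>c n\<bar> * B) \<longlonglongrightarrow> 0"
    using tendsto_mult[OF tendsto_rabs_zero[OF c] tendsto_const[of B]] by simp
  ultimately show "(\<lambda>n. f (c n *\<^sub>R x n)) \<longlonglongrightarrow> 0"
    by (rule Lim_null_comparison[OF always_eventually, OF allI])
qed

lemma weakly_null_half_differences:
  assumes y: "weakly_cauchy P y" and m: "\<And>k. k \<le> m k" and n: "\<And>k. k \<le> n k"
  shows "weakly_null P (\<lambda>k. (1 / 2) *\<^sub>R (y (m k) - y (n k)))"
  unfolding weakly_null_def
proof
  fix f assume f: "f \<in> dual P"
  then obtain L where L: "(\<lambda>k. f (y k)) \<longlonglongrightarrow> L"
    using y unfolding weakly_cauchy_def Cauchy_convergent_iff convergent_def by blast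
  have "filterlim m sequentially sequentially" "filterlim n sequentially sequentially"
    using m n by (auto intro: filterlim_at_top_mono[OF filterlim_ident])
  then have "(\<lambda>k. (f (y (m k)) - f (y (n k))) / 2) \<longlonglongrightarrow> (L - L) / 2"
    using filterlim_compose[OF L] by (intro tendsto_intros) auto
  moreover have "f ((1 / 2) *\<^sub>R (y (m k) - y (n k))) = (f (y (m k)) - f (y (n k))) / 2" for k
    using linear_scale[OF dual_linear[OF f]] linear_diff[OF dual_linear[OF f]] by simp
  ultimately show "(\<lambda>k. f ((1 / 2) *\<^sub>R (y (m k) - y (n k)))) \<longlonglongrightarrow> 0"
    by (simp only:) simp
qed

lemma pq_limited_lcs_bounded:
  assumes lcs: "lcs P" and "0 \<le> q" and conv: "pq_limited_weakly_null_convergent P p q"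
    and A: "pq_limited P p q A" and x: "range x \<subseteq> A"
  shows "lcs_bounded_seq P x"
  unfolding lcs_bounded_seq_def
proof (rule allI, rule ccontr)
  fix i assume "\<nexists>C. \<forall>n. P i (x n) \<le> C"
  then have "\<forall>k. \<exists>n. (real (Suc k))\<^sup>2 < P i (x n)" by (meson not_le)
  then obtain n where n: "\<And>k. (real (Suc k))\<^sup>2 < P i (x (n k))" by metis
  define z where "z k = (1 / real (Suc k)) *\<^sub>R x (n k)" for k
  have "pq_limited P p q (range z)"
  proof (rule pq_limited_combinations[OF A \<open>0 \<le> q\<close>])
    fix b assume "b \<in> range z"
    then obtain k where "b = z k" by blast
    then show "\<exists>u\<in>A. \<exists>v\<in>A. \<exists>s t. \<bar>s\<bar> + \<bar>t\<bar> \<le> 1 \<and> b = s *\<^sub>R u + t *\<^sub>R v"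
      using x unfolding z_def
      by (intro bexI[of _ "x (n k)"] exI[of _ "1 / real (Suc k)"] exI[of _ 0]) auto
  qed simp
  moreover have "weakly_null P z"
    unfolding z_def using pq_limited_weakly_bounded[OF A] x
    by (intro weakly_null_scaled LIMSEQ_Suc[OF lim_const_over_n]) blast+
  ultimately have "(\<lambda>k. P i (z k)) \<longlonglongrightarrow> 0"
    using conv unfolding pq_limited_weakly_null_convergent_def lcs_null_def by blast
  from LIMSEQ_D[OF this zero_less_one] obtain k where k: "\<bar>P i (z k)\<bar> < 1" by auto
  have "P i (z k) = P i (x (n k)) / real (Suc k)"
    using seminorm_scaleR[OF lcs_seminorm[OF lcs]] unfolding z_def by simp
  also have "\<dots> > real (Suc k)"
    using n[of k] by (simp add: field_simps power2_eq_square)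
  finally show False using k by simp
qed

lemma pq_limited_weakly_cauchy_imp_lcs_cauchy:
  assumes lcs: "lcs P" and "0 \<le> q" and conv: "pq_limited_weakly_null_convergent P p q"
    and A: "pq_limited P p q A" and y: "range y \<subseteq> A" "weakly_cauchy P y"
  shows "lcs_cauchy P y"
proof (rule ccontr)
  assume "\<not> lcs_cauchy P y"
  then obtain i e where "e > 0" "\<forall>N. \<exists>m\<ge>N. \<exists>n\<ge>N. e \<le> P i (y m - y n)"
    unfolding lcs_cauchy_def by (auto simp: not_less)
  then obtain m n where m: "\<And>k. k \<le> m k" and n: "\<And>k. k \<le> n k"
    and far: "\<And>k. e \<le> P i (y (m k) - y (n k))" by metis
  define z where "z k = (1 / 2) *\<^sub>R (y (m k) - y (n k))" for k
  have "pq_limited P p q (range z)"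
  proof (rule pq_limited_combinations[OF A \<open>0 \<le> q\<close>])
    fix b assume "b \<in> range z"
    then obtain k where "b = z k" by blast
    then show "\<exists>u\<in>A. \<exists>v\<in>A. \<exists>s t. \<bar>s\<bar> + \<bar>t\<bar> \<le> 1 \<and> b = s *\<^sub>R u + t *\<^sub>R v"
      using y(1) unfolding z_def
      by (intro bexI[of _ "y (m k)"] bexI[of _ "y (n k)"] exI[of _ "1 / 2"] exI[of _ "- 1 / 2"])
        (auto simp: algebra_simps)
  qed simp
  moreover have "weakly_null P z"
    unfolding z_def using weakly_null_half_differences[OF y(2) m n] .
  ultimately have "(\<lambda>k. P i (z k)) \<longlonglongrightarrow> 0"
    using conv unfolding pq_limited_weakly_null_convergent_def lcs_null_def by blast
  from LIMSEQ_D[OF this half_gt_zero[OF \<open>e > 0\<close>]] obtain k where k: "\<bar>P i (z k)\<bar> < e / 2"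
    by auto
  have "P i (z k) = P i (y (m k) - y (n k)) / 2"
    using seminorm_scaleR[OF lcs_seminorm[OF lcs]] unfolding z_def by simp
  then show False using k far[of k] by simp
qed

lemma pq_limited_weakly_null_convergent_imp_spGP:
  assumes lcs: "lcs P" and "0 \<le> q"
    and weakly_cauchy_subseq:
      "\<forall>x. lcs_bounded_seq P x \<longrightarrow> (\<exists>r. strict_mono r \<and> weakly_cauchy P (x \<circ> r))"
    and conv: "pq_limited_weakly_null_convergent P p q"
  shows "spGP P p q"
  unfolding spGP_def seq_precompact_def
proof (intro allI impI)
  fix A x assume A: "pq_limited P p q A" and x: "\<forall>n::nat. x n \<in> A"
  then have "lcs_bounded_seq P x"
    using pq_limited_lcs_bounded[OF lcs \<open>0 \<le> q\<close> conv] by blast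
  then obtain r where "strict_mono r" "weakly_cauchy P (x \<circ> r)"
    using weakly_cauchy_subseq by blast
  moreover have "range (x \<circ> r) \<subseteq> A" using x by auto
  ultimately show "\<exists>r. strict_mono r \<and> lcs_cauchy P (x \<circ> r)"
    using pq_limited_weakly_cauchy_imp_lcs_cauchy[OF lcs \<open>0 \<le> q\<close> conv A] by blast
qed

theorem theoremt:
  fixes P :: "'i \<Rightarrow> 'a::real_vector \<Rightarrow> real" and p q :: ereal
  assumes "lcs P"
    and "1 \<le> p" and "p \<le> q"
    and "\<forall>x. lcs_bounded_seq P x \<longrightarrow> (\<exists>r. strict_mono r \<and> weakly_cauchy P (x \<circ> r))"
  shows "spGP P p q \<longleftrightarrow>
    (\<forall>x. weakly_null P x \<and> pq_limited P p q (range x) \<longrightarrow> lcs_null P x)"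
proof -
  have "(0::ereal) \<le> 1" by simp
  then have "0 \<le> q" using assms(2,3) by (blast intro: order.trans)
  then show ?thesis
    using spGP_imp_pq_limited_weakly_null_convergent[OF assms(1)]
      pq_limited_weakly_null_convergent_imp_spGP[OF assms(1) _ assms(4)]
    unfolding pq_limited_weakly_null_convergent_def by blast
qed

end
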